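(* Let $d\ge1$, let $\Sigma_{\mathrm{aug}}$ be a symmetric positive definite $d\times d$ matrix, let $C\ge1$, $\pi_1,\dots,\pi_C\in[0,1]$ with $\sum_c\pi_c=1$, $\mu_1,\dots,\mu_C\in\mathbb{R}^d$, and $\Sigma_1,\dots,\Sigma_C$ symmetric positive definite $d\times d$ matrices. Let the prior on $\bar z=(z,z')$ be $$p_\psi(\bar z)=\varphi\big(0;\,z-z',\,2\Sigma_{\mathrm{aug}}\big)\sum_{c=1}^C\pi_c\,\varphi\Big(\tfrac{z+z'}{2};\,\mu_c,\,\Sigma_c+\tfrac12\Sigma_{\mathrm{aug}}\Big).$$ Let $\mu_x,\mu_{x'}\in\mathbb{R}^d$, let $\Sigma_x,\Sigma_{x'}$ be positive definite diagonal $d\times d$ matrices, and let $q(\bar z\mid\bar x)=\varphi(z;\mu_x,\Sigma_x)\,\varphi(z';\mu_{x'},\Sigma_{x'})$. Let $p_\theta(\bar x\mid\bar z)$ be a conditional likelihood and $\mathcal{L}(\bar x)=\mathbb{E}_{\bar z\sim q(\bar z\mid\bar x)}[\log p_\theta(\bar x\mid\bar z)]-D_{\mathrm{KL}}(q(\bar z\mid\bar x)\,\|\,p_\psi(\bar z))$. Then $$\mathcal{L}(\bar x)=\mathbb{E}_{q(\bar z\mid\bar x)}\big[\log p_\theta(\bar x\mid\bar z)\big]+\mathbb{E}_{q(\bar z\mid\bar x)}\Big[\log\sum_{c=1}^C\pi_c\,\varphi\Big(\tfrac{z+z'}{2};\mu_c,\Sigma_c+\tfrac12\Sigma_{\mathrm{aug}}\Big)\Big]$$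 $$-\tfrac14\Big\{\operatorname{Tr}\big(\Sigma_{\mathrm{aug}}^{-1}(\Sigma_x+\Sigma_{x'})\big)+(\mu_x-\mu_{x'})^\top\Sigma_{\mathrm{aug}}^{-1}(\mu_x-\mu_{x'})\Big\}+\tfrac12\big(\log\det\Sigma_x+\log\det\Sigma_{x'}\big)+d+\tfrac d2\log\pi-\tfrac12\log\det\Sigma_{\mathrm{aug}}.$$
   Context: For $v,m\in\mathbb{R}^d$ and a symmetric positive definite matrix $S$, $\varphi(v;m,S)=\exp(-\tfrac12(v-m)^\top S^{-1}(v-m))/\sqrt{\det(2\pi S)}$ is the Gaussian density. $\bar x=(x,x')$ is a pair of data points, and $D_{\mathrm{KL}}(q\|p)=\mathbb{E}_q[\log q-\log p]$. This prior is the marginal of $\int\varphi(z;\tilde z,\Sigma_{\mathrm{aug}})\varphi(z';\tilde z,\Sigma_{\mathrm{aug}})\sum_c\pi_c\varphi(\tilde z;\mu_c,\Sigma_c)\,d\tilde z$. *)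

theory Defs
  imports "HOL-Analysis.Analysis"
begin

definition sym_posdef :: "real^'n^'n \<Rightarrow> bool" where
  "sym_posdef S \<longleftrightarrow> transpose S = S \<and> (\<forall>x. x \<noteq> 0 \<longrightarrow> x \<bullet> (S *v x) > 0)"

definition posdef_diag :: "real^'n^'n \<Rightarrow> bool" where
  "posdef_diag S \<longleftrightarrow> (\<forall>i j. i \<noteq> j \<longrightarrow> S$i$j = 0) \<and> (\<forall>i. S$i$i > 0)"

definition gauss_pdf :: "real^'n \<Rightarrow> real^'n \<Rightarrow> real^'n^'n \<Rightarrow> real" where
  "gauss_pdf v m S =
     exp (- (1/2) * ((v - m) \<bullet> (matrix_inv S *v (v - m)))) / sqrt (det ((2 * pi) *\<^sub>R S))"

definition expect :: "('a::euclidean_space \<Rightarrow> real) \<Rightarrow> ('a \<Rightarrow> real) \<Rightarrow> real" where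
  "expect q f = (\<integral>z. q z * f z \<partial>lborel)"

definition KL_div :: "('a::euclidean_space \<Rightarrow> real) \<Rightarrow> ('a \<Rightarrow> real) \<Rightarrow> real" where
  "KL_div q p = expect q (\<lambda>z. ln (q z) - ln (p z))"

definition mix_term ::
  "real^'n^'n \<Rightarrow> nat \<Rightarrow> (nat \<Rightarrow> real) \<Rightarrow> (nat \<Rightarrow> real^'n) \<Rightarrow> (nat \<Rightarrow> real^'n^'n)
     \<Rightarrow> ((real^'n) \<times> (real^'n)) \<Rightarrow> real" where
  "mix_term Saug C pic mu Sc zz =
     (\<Sum>c<C. pic c * gauss_pdf ((1/2) *\<^sub>R (fst zz + snd zz)) (mu c) (Sc c + (1/2) *\<^sub>R Saug))"

definition prior_psi ::
  "real^'n^'n \<Rightarrow> nat \<Rightarrow> (nat \<Rightarrow> real) \<Rightarrow> (nat \<Rightarrow> real^'n) \<Rightarrow> (nat \<Rightarrow> real^'n^'n)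
     \<Rightarrow> ((real^'n) \<times> (real^'n)) \<Rightarrow> real" where
  "prior_psi Saug C pic mu Sc zz =
     gauss_pdf 0 (fst zz - snd zz) (2 *\<^sub>R Saug) * mix_term Saug C pic mu Sc zz"

definition q_post :: "real^'n \<Rightarrow> real^'n^'n \<Rightarrow> real^'n \<Rightarrow> real^'n^'n \<Rightarrow> ((real^'n) \<times> (real^'n)) \<Rightarrow> real" where
  "q_post mx Sx mx' Sx' zz = gauss_pdf (fst zz) mx Sx * gauss_pdf (snd zz) mx' Sx'"

definition elbo :: "('x \<Rightarrow> 'z::euclidean_space \<Rightarrow> real) \<Rightarrow> 'x \<Rightarrow> ('z \<Rightarrow> real) \<Rightarrow> ('z \<Rightarrow> real) \<Rightarrow> real" where
  "elbo ptheta xbar q p = expect q (\<lambda>z. ln (ptheta xbar z)) - KL_div q p"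

end

(* The variational posterior q is a product of one-dimensional normal densities along the
   coordinates of the pair space, and the logarithm of the Gaussian factor phi(0; z - z', 2 Saug)
   of the prior is a quadratic form in z - z'. Hence both ln q and the log of that factor are
   integrated against q using only the first two moments of q: the first gives the entropy
   term -d (1 + ln (2 pi)) - (ln det Sx + ln det Sx') / 2, the second the trace and Mahalanobis
   terms. The mixture factor stays inside its expectation. Because expectations are Bochner
   integrals (which vanish on non-integrable functions), splitting the KL divergence linearly
   needs every piece to be integrable; for the log-mixture this holds because it grows at most
   quadratically in the norm of (z, z'). *)

theory Submission
  imports Defs "HOL-Probability.Distributions"
begin

section \<open>Positive definite matrices\<close>

definition posdef :: "real^'n^'n \<Rightarrow> bool" where
  "posdef S \<longleftrightarrow> (\<forall>x. x \<noteq> 0 \<longrightarrow> 0 < x \<bullet> (S *v x))"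

lemma sym_posdef_imp_posdef: "sym_posdef S \<Longrightarrow> posdef S"
  unfolding sym_posdef_def posdef_def by blast

lemma posdef_add_scaleR:
  assumes "posdef A" "posdef B" "0 < c"
  shows "posdef (A + c *\<^sub>R B)"
  using assms unfolding posdef_def
  by (auto simp: matrix_vector_mult_add_rdistrib inner_add_right scaleR_matrix_vector_assoc[symmetric]
      intro!: add_pos_pos)

lemma posdef_scaleR:
  assumes "posdef A" "0 < c"
  shows "posdef (c *\<^sub>R A)"
  using assms unfolding posdef_def by (simp add: scaleR_matrix_vector_assoc[symmetric])

lemma posdef_det_nonzero:
  fixes S :: "real^'n^'n"
  assumes "posdef S"
  shows "det S \<noteq> 0"
proof -
  have "inj ((*v) S)"
  proof (rule linear_injective_0[THEN iffD2])
    show "linear ((*v) S)" by simp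
    show "\<forall>x. S *v x = 0 \<longrightarrow> x = 0"
      using assms unfolding posdef_def by force
  qed
  then show ?thesis
    using det_nz_iff_inj[OF matrix_vector_mul_linear[of S]] by simp
qed

text \<open>Along the segment from the identity to \<open>S\<close> every matrix is positive definite, so the
  determinant never vanishes and keeps the sign it has at the identity.\<close>
lemma posdef_det_pos:
  fixes S :: "real^'n^'n"
  assumes "posdef S"
  shows "0 < det S"
proof (rule ccontr)
  assume "\<not> 0 < det S"
  define M where "M t = (1 - t) *\<^sub>R (mat 1 :: real^'n^'n) + t *\<^sub>R S" for t :: real
  have "continuous_on {0..1} (\<lambda>t. det (M t))"
    unfolding M_def det_def mat_def by (intro continuous_intros)
  moreover have "det (M 1) \<le> 0" "0 \<le> det (M 0)"
    using \<open>\<not> 0 < det S\<close> by (auto simp: M_def)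
  ultimately obtain t where t: "0 \<le> t" "t \<le> 1" "det (M t) = 0"
    using IVT2'[of "\<lambda>t. det (M t)" 1 0 0] by auto
  have "posdef (M t)"
    unfolding posdef_def
  proof (intro allI impI)
    fix x :: "real^'n"
    assume "x \<noteq> 0"
    have "x \<bullet> (M t *v x) = (1 - t) * (x \<bullet> x) + t * (x \<bullet> (S *v x))"
      by (simp add: M_def matrix_vector_mult_add_rdistrib inner_add_right
          scaleR_matrix_vector_assoc[symmetric])
    moreover have "0 < x \<bullet> x" "0 < x \<bullet> (S *v x)"
      using \<open>x \<noteq> 0\<close> assms by (auto simp: posdef_def)
    ultimately show "0 < x \<bullet> (M t *v x)"
      using t by (cases "t = 1") (auto intro: add_pos_nonneg)
  qed
  with t show False using posdef_det_nonzero by blast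
qed

lemma posdef_invertible: "posdef S \<Longrightarrow> invertible S"
  using posdef_det_nonzero invertible_det_nz by blast

lemma
  assumes "invertible (A :: 'a::semiring_1^'n^'m)"
  shows matrix_inv_right: "A ** matrix_inv A = mat 1"
    and matrix_inv_left: "matrix_inv A ** A = mat 1"
proof -
  have "A ** matrix_inv A = mat 1 \<and> matrix_inv A ** A = mat 1"
    using assms unfolding matrix_inv_def invertible_def by (rule someI_ex)
  then show "A ** matrix_inv A = mat 1" "matrix_inv A ** A = mat 1" by auto
qed

lemma matrix_inv_unique:
  fixes A :: "'a::comm_semiring_1^'n^'n"
  assumes "A ** B = mat 1" "B ** A = mat 1"
  shows "matrix_inv A = B"
proof -
  have inv: "invertible A" using assms unfolding invertible_def by blast
  have "matrix_inv A = matrix_inv A ** (A ** B)" using assms by simp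
  also have "\<dots> = B" by (simp add: matrix_mul_assoc matrix_inv_left[OF inv])
  finally show ?thesis .
qed

lemma matrix_inv_scaleR:
  fixes A :: "real^'n^'n"
  assumes "invertible A" "c \<noteq> 0"
  shows "matrix_inv (c *\<^sub>R A) = inverse c *\<^sub>R matrix_inv A"
  using matrix_inv_right[OF assms(1)] matrix_inv_left[OF assms(1)] assms(2)
  by (intro matrix_inv_unique) (simp_all add: matrix_scalar_ac scalar_matrix_assoc)

lemma posdef_inv_quadratic_nonneg:
  assumes "posdef S"
  shows "0 \<le> v \<bullet> (matrix_inv S *v v)"
proof -
  define y where "y = matrix_inv S *v v"
  have "S *v y = v"
    unfolding y_def by (simp add: matrix_vector_mul_assoc matrix_inv_right[OF posdef_invertible[OF assms]])
  then have "v \<bullet> (matrix_inv S *v v) = y \<bullet> (S *v y)"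
    unfolding y_def[symmetric] by (metis inner_commute)
  also have "0 \<le> \<dots>" using assms unfolding posdef_def by (cases "y = 0") (auto intro: less_imp_le)
  finally show ?thesis .
qed

lemma det_scaleR: "det (c *\<^sub>R A) = c ^ CARD('n) * det (A :: real^'n^'n)"
proof -
  have "c *\<^sub>R A = (\<chi> i. c *s (A$i))" by (simp add: vec_eq_iff scalar_mult_eq_scaleR)
  then show ?thesis using det_rows_mul[of "\<lambda>_. c" "\<lambda>i. A$i"] by simp
qed

lemma det_posdef_diag: "posdef_diag S \<Longrightarrow> det S = (\<Prod>i\<in>UNIV. S$i$i)"
  by (rule det_diagonal) (simp add: posdef_diag_def)

lemma ln_det_posdef_diag:
  assumes "posdef_diag S"
  shows "ln (det S) = (\<Sum>i\<in>UNIV. ln (S$i$i))"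
  using assms unfolding det_posdef_diag[OF assms] posdef_diag_def
  by (subst ln_prod) (auto simp: less_imp_neq[symmetric])

lemma trace_mult_posdef_diag:
  assumes "posdef_diag D"
  shows "trace (A ** D) = (\<Sum>i\<in>UNIV. A$i$i * D$i$i)"
proof -
  have "(\<Sum>k\<in>UNIV. A$i$k * D$k$i) = A$i$i * D$i$i" for i
    using assms unfolding posdef_diag_def by (subst sum.remove[of _ i]) auto
  then show ?thesis by (simp add: trace_def matrix_matrix_mult_def)
qed

lemma matrix_inv_posdef_diag:
  fixes S :: "real^'n^'n"
  assumes "posdef_diag S"
  shows "matrix_inv S = (\<chi> i j. if i = j then 1 / S$i$i else 0)"
proof (rule matrix_inv_unique)
  have pos: "0 < S$i$i" and off: "i \<noteq> j \<Longrightarrow> S$i$j = 0" for i j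
    using assms unfolding posdef_diag_def by auto
  have "(\<Sum>k\<in>UNIV. S$i$k * (if k = j then 1 / S$k$k else 0)) = (if i = j then 1 else 0)" for i j
    using pos[of j] off[of i j] by (simp add: if_distrib[of "\<lambda>x. _ * x"] cong: if_cong)
  then show "S ** (\<chi> i j. if i = j then 1 / S$i$i else 0) = mat 1"
    by (simp add: matrix_matrix_mult_def mat_def vec_eq_iff)
  have "(\<Sum>k\<in>UNIV. (if i = k then 1 / S$i$i else 0) * S$k$j) = (if i = j then 1 else 0)" for i j
    using pos[of i] pos[of j] off[of i j] by (simp add: if_distrib[of "\<lambda>x. x * _"] cong: if_cong)
  then show "(\<chi> i j. if i = j then 1 / S$i$i else 0) ** S = mat 1"
    by (simp add: matrix_matrix_mult_def mat_def vec_eq_iff)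
qed

section \<open>Gaussian densities and their mixtures\<close>

lemma gauss_pdf_pos:
  assumes "posdef S"
  shows "0 < gauss_pdf v m S"
  using posdef_det_pos[OF posdef_scaleR[OF assms, of "2 * pi"]] by (simp add: gauss_pdf_def)

lemma gauss_pdf_le:
  assumes "posdef S"
  shows "gauss_pdf v m S \<le> 1 / sqrt (det ((2 * pi) *\<^sub>R S))"
proof -
  have "exp (- (1/2) * ((v - m) \<bullet> (matrix_inv S *v (v - m)))) \<le> 1"
    using posdef_inv_quadratic_nonneg[OF assms] by simp
  then show ?thesis
    using posdef_det_pos[OF posdef_scaleR[OF assms, of "2 * pi"]]
    by (simp add: gauss_pdf_def divide_right_mono)
qed

lemma ln_gauss_pdf:
  fixes S :: "real^'n^'n"
  assumes "posdef S"
  shows "ln (gauss_pdf v m S) = - (1/2) * ((v - m) \<bullet> (matrix_inv S *v (v - m)))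
    - (1/2) * (real CARD('n) * ln (2 * pi) + ln (det S))"
  using posdef_det_pos[OF assms]
  by (simp add: gauss_pdf_def ln_div det_scaleR ln_sqrt ln_mult ln_realpow algebra_simps)

lemma real_sqrt_prod: "sqrt (prod f A) = (\<Prod>i\<in>A. sqrt (f i))"
  by (induction A rule: infinite_finite_induct) (simp_all add: real_sqrt_mult)

lemma gauss_pdf_posdef_diag:
  fixes S :: "real^'n^'n"
  assumes "posdef_diag S"
  shows "gauss_pdf v m S = (\<Prod>i\<in>UNIV. normal_density (m$i) (sqrt (S$i$i)) (v$i))"
proof -
  have pos: "0 < S$i$i" for i using assms unfolding posdef_diag_def by auto
  have "(v - m) \<bullet> (matrix_inv S *v (v - m)) = (\<Sum>i\<in>UNIV. (v$i - m$i)^2 / S$i$i)"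
    by (simp add: matrix_inv_posdef_diag[OF assms] inner_vec_def matrix_vector_mult_def
        if_distrib[of "\<lambda>x. x * _"] power2_eq_square cong: if_cong)
  moreover have "det ((2 * pi) *\<^sub>R S) = (\<Prod>i\<in>UNIV. 2 * pi * S$i$i)"
    using assms by (subst det_diagonal) (auto simp: posdef_diag_def)
  ultimately have "gauss_pdf v m S
      = (\<Prod>i\<in>UNIV. exp (- ((v$i - m$i)^2 / (2 * S$i$i))) / sqrt (2 * pi * S$i$i))"
    by (simp add: gauss_pdf_def sum_distrib_left exp_sum prod_dividef real_sqrt_prod
        flip: sum_negf)
  also have "\<dots> = (\<Prod>i\<in>UNIV. normal_density (m$i) (sqrt (S$i$i)) (v$i))"
    using pos by (intro prod.cong refl) (simp add: normal_density_def less_imp_le)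
  finally show ?thesis .
qed

lemma continuous_on_gauss_pdf [continuous_intros]:
  "continuous_on A f \<Longrightarrow> continuous_on A (\<lambda>x. gauss_pdf (f x) m S)"
  unfolding gauss_pdf_def divide_inverse
  by (intro continuous_intros continuous_on_compose2[OF matrix_vector_mult_linear_continuous_on]) auto

lemma ln_gauss_pdf_ge_quadratic:
  fixes S :: "real^'n^'n"
  assumes "posdef S"
  obtains K B where "0 \<le> K" "0 \<le> B" "\<And>v. - (K + B * (norm v)^2) \<le> ln (gauss_pdf v m S)"
proof -
  obtain B where B: "0 < B" "\<And>x. norm (matrix_inv S *v x) \<le> norm x * B"
    using bounded_linear.pos_bounded[OF matrix_vector_mul_bounded_linear] by blast
  define c where "c = real CARD('n) * ln (2 * pi) + ln (det S)"
  have bound: "- (B * (norm m)^2 + \<bar>c\<bar> / 2 + B * (norm v)^2) \<le> ln (gauss_pdf v m S)" for v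
  proof -
    have "(v - m) \<bullet> (matrix_inv S *v (v - m)) \<le> norm (v - m) * (norm (v - m) * B)"
      using norm_cauchy_schwarz[of "v - m"] B(2)[of "v - m"]
      by (meson order_trans mult_left_mono norm_ge_zero)
    also have "\<dots> = B * (norm (v - m))^2" by (simp add: power2_eq_square)
    also have "\<dots> \<le> B * (2 * (norm v)^2 + 2 * (norm m)^2)"
    proof -
      have "(norm (v - m))^2 \<le> (norm v + norm m)^2"
        by (simp add: norm_triangle_ineq4 power_mono)
      also have "\<dots> \<le> 2 * (norm v)^2 + 2 * (norm m)^2"
        using sum_squares_bound[of "norm v" "norm m"] by (simp add: power2_sum)
      finally show ?thesis using B(1) by simp
    qed
    finally show ?thesis
      unfolding ln_gauss_pdf[OF assms] c_def[symmetric] using abs_ge_minus_self[of c]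
      by (simp add: algebra_simps del: inner_diff_left inner_diff_right matrix_vector_mult_diff_distrib)
  qed
  show ?thesis by (rule that[OF _ _ bound]) (use B(1) in simp_all)
qed

lemma sum_nonneg_eq_1_obtain_pos:
  fixes C :: nat
  assumes "\<And>c. c < C \<Longrightarrow> 0 \<le> w c" "(\<Sum>c<C. w c) = (1::real)"
  obtains c where "c < C" "0 < w c"
proof -
  obtain c where "c < C" "w c \<noteq> 0" using assms(2) by (metis lessThan_iff sum.neutral zero_neq_one)
  with assms(1) that show ?thesis by (simp add: order_less_le)
qed

lemma gauss_mixture_pos:
  fixes C :: nat
  assumes "\<And>c. c < C \<Longrightarrow> posdef (S c)" "\<And>c. c < C \<Longrightarrow> 0 \<le> w c" "(\<Sum>c<C. w c) = 1"
  shows "0 < (\<Sum>c<C. w c * gauss_pdf v (m c) (S c))"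
proof -
  obtain c0 where c0: "c0 < C" "0 < w c0" using sum_nonneg_eq_1_obtain_pos assms(2,3) by blast
  have "0 < w c0 * gauss_pdf v (m c0) (S c0)" using c0(2) gauss_pdf_pos[OF assms(1)[OF c0(1)]] by simp
  moreover have "0 \<le> w c * gauss_pdf v (m c) (S c)" if "c < C" for c
    using that assms(1,2) gauss_pdf_pos[of "S c"] by (simp add: less_imp_le)
  ultimately show ?thesis using c0(1) by (intro sum_pos2[where i=c0]) auto
qed

text \<open>A single component bounds the mixture below; the normalising constants bound it above.\<close>
lemma ln_gauss_mixture_bound:
  fixes C :: nat
  assumes "\<And>c. c < C \<Longrightarrow> posdef (S c)" "\<And>c. c < C \<Longrightarrow> 0 \<le> w c" "(\<Sum>c<C. w c) = 1"
  obtains K B where "0 \<le> B"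
    "\<And>v. \<bar>ln (\<Sum>c<C. w c * gauss_pdf v (m c) (S c))\<bar> \<le> K + B * (norm v)^2"
proof -
  let ?mix = "\<lambda>v. \<Sum>c<C. w c * gauss_pdf v (m c) (S c)"
  obtain c0 where c0: "c0 < C" "0 < w c0" using sum_nonneg_eq_1_obtain_pos assms(2,3) by blast
  obtain K0 B where B: "0 \<le> K0" "0 \<le> B" "\<And>v. - (K0 + B * (norm v)^2) \<le> ln (gauss_pdf v (m c0) (S c0))"
    using ln_gauss_pdf_ge_quadratic[OF assms(1)[OF c0(1)]] by blast
  define U where "U = (\<Sum>c<C. w c * (1 / sqrt (det ((2 * pi) *\<^sub>R S c))))"
  have "\<bar>ln (?mix v)\<bar> \<le> (\<bar>ln U\<bar> + \<bar>ln (w c0)\<bar> + K0) + B * (norm v)^2" for v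
  proof -
    have mix_pos: "0 < ?mix v" by (rule gauss_mixture_pos[OF assms])
    have g_pos: "0 < gauss_pdf v (m c0) (S c0)" using gauss_pdf_pos assms(1) c0(1) by blast
    have "0 \<le> w c * gauss_pdf v (m c) (S c)" if "c < C" for c
      using that assms(1,2) gauss_pdf_pos[of "S c"] by (simp add: less_imp_le)
    then have "w c0 * gauss_pdf v (m c0) (S c0) \<le> ?mix v"
      using c0(1) by (intro member_le_sum) auto
    then have "ln (w c0 * gauss_pdf v (m c0) (S c0)) \<le> ln (?mix v)"
      by (rule ln_mono) (use c0(2) g_pos in simp)
    then have "ln (w c0) + ln (gauss_pdf v (m c0) (S c0)) \<le> ln (?mix v)"
      using c0(2) g_pos by (simp add: ln_mult)
    moreover have "?mix v \<le> U"
      unfolding U_def by (intro sum_mono mult_left_mono gauss_pdf_le assms(1,2)) auto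
    then have "ln (?mix v) \<le> ln U"
      by (rule ln_mono) (fact mix_pos)
    ultimately show ?thesis
      using B(1) B(3)[of v] mult_nonneg_nonneg[OF B(2) zero_le_power2[of "norm v"]]
        abs_ge_self[of "ln U"] abs_ge_minus_self[of "ln (w c0)"]
      unfolding abs_le_iff by linarith
  qed
  with B(2) that show ?thesis by blast
qed

section \<open>Products of one-dimensional normal densities\<close>

lemma has_bochner_integral_normal_density_square:
  assumes "0 < \<sigma>"
  shows "has_bochner_integral lborel (\<lambda>t. normal_density \<mu> \<sigma> t * (t * t)) (\<mu> * \<mu> + \<sigma>^2)"
proof -
  have "has_bochner_integral lborel
      (\<lambda>t. normal_density \<mu> \<sigma> t * (t - \<mu>)^(2 * 1) + 2 * \<mu> * (normal_density \<mu> \<sigma> t * t)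
         - \<mu> * \<mu> * normal_density \<mu> \<sigma> t)
      (\<sigma>^2 + 2 * \<mu> * \<mu> - \<mu> * \<mu> * 1)"
    using normal_moment_even[OF assms, of \<mu> 1] normal_moment_nz_1[OF assms, of \<mu>]
      integrable_normal_density[OF assms, of \<mu>] integral_normal_density[OF assms, of \<mu>]
    by (intro has_bochner_integral_diff has_bochner_integral_add has_bochner_integral_mult_right)
      (auto simp: has_bochner_integral_iff)
  then show ?thesis by (simp add: power2_eq_square algebra_simps)
qed

lemma ln_normal_density:
  assumes "0 < \<sigma>"
  shows "ln (normal_density \<mu> \<sigma> t) = - ln (2 * pi * \<sigma>^2) / 2 - (t - \<mu>)^2 / (2 * \<sigma>^2)"
  using assms by (simp add: normal_density_def ln_mult ln_div ln_sqrt field_simps)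

lemma has_bochner_integral_lborel_prod_Basis:
  fixes f :: "'a::euclidean_space \<Rightarrow> real \<Rightarrow> real"
  assumes "\<And>b. b \<in> Basis \<Longrightarrow> has_bochner_integral lborel (f b) (I b)"
  shows "has_bochner_integral lborel (\<lambda>x::'a. \<Prod>b\<in>Basis. f b (x \<bullet> b)) (\<Prod>b\<in>Basis. I b)"
proof -
  interpret product_sigma_finite "\<lambda>_. lborel :: real measure" by standard
  let ?T = "\<lambda>g. \<Sum>b\<in>Basis. g b *\<^sub>R (b::'a)"
  have int: "integrable lborel (f b)" and val: "integral\<^sup>L lborel (f b) = I b" if "b \<in> Basis" for b
    using assms[OF that] by (auto simp: has_bochner_integral_iff)
  have [measurable]: "f b \<in> borel_measurable borel" if "b \<in> Basis" for b
    using borel_measurable_integrable[OF int[OF that]] by simp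
  have T_meas: "?T \<in> measurable (\<Pi>\<^sub>M b\<in>Basis. lborel) borel" by measurable
  have F_meas: "(\<lambda>x::'a. \<Prod>b\<in>Basis. f b (x \<bullet> b)) \<in> borel_measurable borel" by measurable
  have "?T g \<bullet> b = g b" if "b \<in> Basis" for g b
    using that by (simp add: inner_sum_left inner_Basis if_distrib cong: if_cong)
  then have comp: "(\<lambda>g. \<Prod>b\<in>Basis. f b (?T g \<bullet> b)) = (\<lambda>g. \<Prod>b\<in>Basis. f b (g b))"
    by (intro ext prod.cong) auto
  have "integrable (\<Pi>\<^sub>M b\<in>Basis. lborel) (\<lambda>g. \<Prod>b\<in>Basis. f b (g b))"
    by (rule product_integrable_prod) (auto intro: int)
  moreover have "(\<integral>g. (\<Prod>b\<in>Basis. f b (g b)) \<partial>(\<Pi>\<^sub>M b\<in>Basis. lborel)) = (\<Prod>b\<in>Basis. I b)"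
    using product_integral_prod[of Basis f] int val by simp
  \<comment> \<open>Unrestricted, \<open>lborel_eq\<close> would rewrite forever: its right-hand side contains \<open>lborel\<close> on \<open>real\<close>.\<close>
  ultimately show ?thesis
    unfolding lborel_eq[where 'a='a] has_bochner_integral_iff integrable_distr_eq[OF T_meas F_meas]
      integral_distr[OF T_meas F_meas] comp by blast
qed

locale diag_normal =
  fixes m :: "'a::euclidean_space" and \<sigma> :: "'a \<Rightarrow> real"
  assumes \<sigma>_pos: "\<And>b. b \<in> Basis \<Longrightarrow> 0 < \<sigma> b"
begin

definition density :: "'a \<Rightarrow> real" where
  "density x = (\<Prod>b\<in>Basis. normal_density (m \<bullet> b) (\<sigma> b) (x \<bullet> b))"

lemma density_pos: "0 < density x"
  unfolding density_def using \<sigma>_pos by (intro prod_pos normal_density_pos) auto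

lemma has_bochner_integral_density_prod:
  assumes "\<And>b. b \<in> Basis \<Longrightarrow>
    has_bochner_integral lborel (\<lambda>t. normal_density (m \<bullet> b) (\<sigma> b) t * h b t) (I b)"
  shows "has_bochner_integral lborel (\<lambda>x. density x * (\<Prod>b\<in>Basis. h b (x \<bullet> b))) (\<Prod>b\<in>Basis. I b)"
  using has_bochner_integral_lborel_prod_Basis[OF assms]
  by (simp add: density_def prod.distrib)

lemma has_bochner_integral_normal_density_one:
  "b \<in> Basis \<Longrightarrow> has_bochner_integral lborel (\<lambda>t. normal_density (m \<bullet> b) (\<sigma> b) t * 1) 1"
  using \<sigma>_pos by (simp add: has_bochner_integral_iff)

lemma has_bochner_integral_density: "has_bochner_integral lborel density 1"
  using has_bochner_integral_density_prod[of "\<lambda>_ _. 1" "\<lambda>_. 1"]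
    has_bochner_integral_normal_density_one by simp

lemma has_bochner_integral_density_coordinate:
  assumes "b \<in> Basis"
    and "has_bochner_integral lborel (\<lambda>t. normal_density (m \<bullet> b) (\<sigma> b) t * g t) v"
  shows "has_bochner_integral lborel (\<lambda>x. density x * g (x \<bullet> b)) v"
proof -
  let ?h = "\<lambda>b' t. if b' = b then g t else 1"
  have "has_bochner_integral lborel (\<lambda>x. density x * (\<Prod>b'\<in>Basis. ?h b' (x \<bullet> b')))
      (\<Prod>b'\<in>Basis. if b' = b then v else 1)"
    using assms(2) has_bochner_integral_normal_density_one
    by (intro has_bochner_integral_density_prod) auto
  then show ?thesis
    using assms(1) by (simp add: if_distrib[of "\<lambda>f. f _"] cong: if_cong)
qed

lemma has_bochner_integral_density_two_coordinates:
  assumes "b \<in> Basis" "b' \<in> Basis" "b \<noteq> b'"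
    and "has_bochner_integral lborel (\<lambda>t. normal_density (m \<bullet> b) (\<sigma> b) t * g t) v"
    and "has_bochner_integral lborel (\<lambda>t. normal_density (m \<bullet> b') (\<sigma> b') t * g' t) v'"
  shows "has_bochner_integral lborel (\<lambda>x. density x * (g (x \<bullet> b) * g' (x \<bullet> b'))) (v * v')"
proof -
  let ?h = "\<lambda>c t. if c = b then g t else if c = b' then g' t else 1"
  have "has_bochner_integral lborel (\<lambda>x. density x * (\<Prod>c\<in>Basis. ?h c (x \<bullet> c)))
      (\<Prod>c\<in>Basis. if c = b then v else if c = b' then v' else 1)"
    using assms(4,5) has_bochner_integral_normal_density_one
    by (intro has_bochner_integral_density_prod) auto
  moreover have "(\<Prod>c\<in>Basis. F c) = F b * F b'"
    if "\<And>c. c \<noteq> b \<Longrightarrow> c \<noteq> b' \<Longrightarrow> F c = 1" for F :: "'a \<Rightarrow> real"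
  proof -
    have "(\<Prod>c\<in>Basis. F c) = (\<Prod>c\<in>{b, b'}. F c)"
      using that assms(1,2) by (intro prod.mono_neutral_right) auto
    then show ?thesis using assms(3) by simp
  qed
  ultimately show ?thesis using assms(3) by simp
qed

lemma has_bochner_integral_density_mult_inner_Basis:
  assumes "b \<in> Basis" "b' \<in> Basis"
  shows "has_bochner_integral lborel (\<lambda>x. density x * ((x \<bullet> b) * (x \<bullet> b')))
    ((m \<bullet> b) * (m \<bullet> b') + (if b = b' then (\<sigma> b)^2 else 0))"
proof (cases "b = b'")
  case True
  then show ?thesis
    using has_bochner_integral_density_coordinate[OF assms(1)
        has_bochner_integral_normal_density_square[OF \<sigma>_pos[OF assms(1)]]]
    by simp
next
  case False
  then show ?thesis
    using has_bochner_integral_density_two_coordinates[OF assms False,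
        OF normal_moment_nz_1 normal_moment_nz_1] \<sigma>_pos assms
    by simp
qed

lemma has_bochner_integral_density_mult_inner:
  "has_bochner_integral lborel (\<lambda>x. density x * ((x \<bullet> u) * (x \<bullet> v)))
    ((m \<bullet> u) * (m \<bullet> v) + (\<Sum>b\<in>Basis. (u \<bullet> b) * (v \<bullet> b) * (\<sigma> b)^2))"
proof -
  have "has_bochner_integral lborel
      (\<lambda>x. \<Sum>b\<in>Basis. \<Sum>b'\<in>Basis. (u \<bullet> b) * (v \<bullet> b') * (density x * ((x \<bullet> b) * (x \<bullet> b'))))
      (\<Sum>b\<in>Basis. \<Sum>b'\<in>Basis. (u \<bullet> b) * (v \<bullet> b') *
         ((m \<bullet> b) * (m \<bullet> b') + (if b = b' then (\<sigma> b)^2 else 0)))"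
    by (intro has_bochner_integral_sum has_bochner_integral_mult_right
        has_bochner_integral_density_mult_inner_Basis)
  moreover have "(\<Sum>b\<in>Basis. \<Sum>b'\<in>Basis. (u \<bullet> b) * (v \<bullet> b') * (density x * ((x \<bullet> b) * (x \<bullet> b'))))
      = density x * ((x \<bullet> u) * (x \<bullet> v))" for x
    by (simp add: euclidean_inner[of x u] euclidean_inner[of x v] sum_product sum_distrib_left mult_ac,
        subst sum.swap, simp add: mult_ac)
  moreover have "(\<Sum>b\<in>Basis. \<Sum>b'\<in>Basis. (u \<bullet> b) * (v \<bullet> b') *
         ((m \<bullet> b) * (m \<bullet> b') + (if b = b' then (\<sigma> b)^2 else 0)))
      = (m \<bullet> u) * (m \<bullet> v) + (\<Sum>b\<in>Basis. (u \<bullet> b) * (v \<bullet> b) * (\<sigma> b)^2)"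
    by (simp add: euclidean_inner[of m u] euclidean_inner[of m v] distrib_left sum.distrib
        sum_product mult_ac if_distrib[of "\<lambda>x. _ * x"] cong: if_cong)
  ultimately show ?thesis by simp
qed

lemma has_bochner_integral_density_ln_density:
  "has_bochner_integral lborel (\<lambda>x. density x * ln (density x))
    (\<Sum>b\<in>Basis. - (ln (2 * pi * (\<sigma> b)^2) + 1) / 2)"
proof -
  have "has_bochner_integral lborel
      (\<lambda>x. \<Sum>b\<in>Basis. - ln (2 * pi * (\<sigma> b)^2) / 2 * density x
         - 1 / (2 * (\<sigma> b)^2) * (density x * (x \<bullet> b - m \<bullet> b)^2))
      (\<Sum>b\<in>Basis. - ln (2 * pi * (\<sigma> b)^2) / 2 * 1 - 1 / (2 * (\<sigma> b)^2) * (\<sigma> b)^2)"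
    using normal_moment_even[OF \<sigma>_pos, of _ _ 1]
    by (intro has_bochner_integral_sum has_bochner_integral_diff has_bochner_integral_mult_right
        has_bochner_integral_density has_bochner_integral_density_coordinate[where g="\<lambda>t. (t - _)^2"])
      simp_all
  moreover have "density x * ln (density x) = (\<Sum>b\<in>Basis. - ln (2 * pi * (\<sigma> b)^2) / 2 * density x
         - 1 / (2 * (\<sigma> b)^2) * (density x * (x \<bullet> b - m \<bullet> b)^2))" for x
  proof -
    have "ln (density x) = (\<Sum>b\<in>Basis. ln (normal_density (m \<bullet> b) (\<sigma> b) (x \<bullet> b)))"
      unfolding density_def using \<sigma>_pos by (simp add: ln_prod normal_density_pos less_imp_neq[symmetric])
    then show ?thesis
      using \<sigma>_pos by (simp add: ln_normal_density sum_distrib_left algebra_simps cong: sum.cong)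
  qed
  moreover have "(\<Sum>b\<in>Basis. - ln (2 * pi * (\<sigma> b)^2) / 2 * 1 - 1 / (2 * (\<sigma> b)^2) * (\<sigma> b)^2)
      = (\<Sum>b\<in>Basis. - (ln (2 * pi * (\<sigma> b)^2) + 1) / 2)"
    using \<sigma>_pos by (intro sum.cong) (auto simp: field_simps less_imp_neq[symmetric])
  ultimately show ?thesis by simp
qed

lemma integrable_density_mult:
  assumes "f \<in> borel_measurable lborel" "\<And>x. \<bar>f x\<bar> \<le> K + B * (norm x)^2"
  shows "integrable lborel (\<lambda>x. density x * f x)"
proof (rule Bochner_Integration.integrable_bound)
  let ?g = "\<lambda>x. K * density x + B * (\<Sum>b\<in>Basis. density x * ((x \<bullet> b) * (x \<bullet> b)))"
  show "integrable lborel ?g"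
    using has_bochner_integral_density has_bochner_integral_density_mult_inner_Basis
    by (intro Bochner_Integration.integrable_add Bochner_Integration.integrable_sum integrable_mult_right)
      (auto simp: has_bochner_integral_iff)
  show "(\<lambda>x. density x * f x) \<in> borel_measurable lborel"
    using has_bochner_integral_density assms(1) by (auto simp: has_bochner_integral_iff)
  show "AE x in lborel. norm (density x * f x) \<le> norm (?g x)"
  proof (rule AE_I2)
    fix x
    have "?g x = density x * (K + B * (norm x)^2)"
      by (simp add: power2_norm_eq_inner euclidean_inner[of x x] sum_distrib_left algebra_simps)
    then show "norm (density x * f x) \<le> norm (?g x)"
      using density_pos[of x] assms(2)[of x] by (simp add: abs_mult mult_left_mono)
  qed
qed

end

section \<open>The variational posterior on pairs\<close>

lemma
  fixes F :: "'a::euclidean_space \<times> 'b::euclidean_space \<Rightarrow> 'c::comm_monoid_mult"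
    and G :: "'a \<times> 'b \<Rightarrow> 'd::comm_monoid_add"
  shows prod_Basis_prod_split: "(\<Prod>b\<in>Basis. F b) = (\<Prod>u\<in>Basis. F (u, 0)) * (\<Prod>v\<in>Basis. F (0, v))"
    and sum_Basis_prod_split: "(\<Sum>b\<in>Basis. G b) = (\<Sum>u\<in>Basis. G (u, 0)) + (\<Sum>v\<in>Basis. G (0, v))"
proof -
  have "inj_on (\<lambda>u. (u::'a, 0::'b)) Basis" "inj_on (\<lambda>v. (0::'a, v::'b)) Basis"
    by (auto intro!: inj_onI)
  then show "(\<Prod>b\<in>Basis. F b) = (\<Prod>u\<in>Basis. F (u, 0)) * (\<Prod>v\<in>Basis. F (0, v))"
    and "(\<Sum>b\<in>Basis. G b) = (\<Sum>u\<in>Basis. G (u, 0)) + (\<Sum>v\<in>Basis. G (0, v))"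
    unfolding Basis_prod_def
    by (subst prod.union_disjoint sum.union_disjoint; auto simp: prod.reindex sum.reindex)+
qed

lemma Basis_vec_real: "(Basis :: (real^'n) set) = range (\<lambda>i. axis i 1)"
  by (auto simp: Basis_vec_def)

lemma inj_axis_one: "inj (\<lambda>i::'n::finite. axis i (1::real))"
  by (auto intro!: injI simp: axis_eq_axis)

lemma sum_Basis_vec: "(\<Sum>u\<in>(Basis :: (real^'n) set). F u) = (\<Sum>i\<in>UNIV. F (axis i 1))"
  unfolding Basis_vec_real by (simp add: sum.reindex[OF inj_axis_one])

lemma prod_Basis_vec: "(\<Prod>u\<in>(Basis :: (real^'n) set). F u) = (\<Prod>i\<in>UNIV. F (axis i 1))"
  unfolding Basis_vec_real by (simp add: prod.reindex[OF inj_axis_one])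

lemma inner_axis_matrix_vector_axis: "axis i 1 \<bullet> (A *v axis i 1) = (A :: real^'n^'n) $ i $ i"
  by (simp add: inner_axis' matrix_vector_mult_basis column_def)

text \<open>Standard deviation of \<open>q(z, z')\<close> along a coordinate direction \<open>b\<close> of the pair space,
  i.e. \<open>sqrt (b\<^sup>T diag(Sx, Sx') b)\<close>.\<close>
definition pair_sd :: "real^'n^'n \<Rightarrow> real^'n^'n \<Rightarrow> (real^'n) \<times> (real^'n) \<Rightarrow> real" where
  "pair_sd Sx Sx' b = sqrt (fst b \<bullet> (Sx *v fst b) + snd b \<bullet> (Sx' *v snd b))"

lemma pair_sd_axis:
  "pair_sd Sx Sx' (axis i 1, 0) = sqrt (Sx$i$i)" "pair_sd Sx Sx' (0, axis i 1) = sqrt (Sx'$i$i)"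
  by (simp_all add: pair_sd_def inner_axis_matrix_vector_axis)

lemma diag_normal_pair_sd:
  fixes Sx Sx' :: "real^'n^'n"
  assumes "posdef_diag Sx" "posdef_diag Sx'"
  shows "diag_normal (pair_sd Sx Sx')"
proof
  fix b :: "(real^'n) \<times> (real^'n)"
  assume "b \<in> Basis"
  then obtain i where "b = (axis i 1, 0) \<or> b = (0, axis i 1)"
    unfolding Basis_prod_def Basis_vec_real by blast
  then show "0 < pair_sd Sx Sx' b"
    using assms by (auto simp: pair_sd_axis posdef_diag_def)
qed

lemma q_post_eq_density:
  assumes "posdef_diag Sx" "posdef_diag Sx'"
  shows "q_post mx Sx mx' Sx' = diag_normal.density (mx, mx') (pair_sd Sx Sx')"
proof -
  interpret diag_normal "(mx, mx')" "pair_sd Sx Sx'" using diag_normal_pair_sd[OF assms] .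
  show ?thesis
    by (rule ext)
      (simp add: q_post_def density_def gauss_pdf_posdef_diag[OF assms(1)]
        gauss_pdf_posdef_diag[OF assms(2)] prod_Basis_prod_split prod_Basis_vec inner_Pair_0 inner_axis
        pair_sd_axis)
qed

lemma has_bochner_integral_q_post:
  assumes "posdef_diag Sx" "posdef_diag Sx'"
  shows "has_bochner_integral lborel (q_post mx Sx mx' Sx') 1"
  using diag_normal.has_bochner_integral_density[OF diag_normal_pair_sd[OF assms]]
  by (simp add: q_post_eq_density[OF assms])

lemma sum_Basis_pair_sd:
  fixes Sx Sx' :: "real^'n^'n"
  assumes "posdef_diag Sx" "posdef_diag Sx'"
  shows "(\<Sum>b\<in>Basis. ((axis i 1, - axis i 1) \<bullet> b) * ((axis j 1, - axis j 1) \<bullet> b) * (pair_sd Sx Sx' b)^2)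
    = (if i = j then Sx$i$i + Sx'$i$i else 0)"
proof -
  have "0 \<le> Sx$k$k" "0 \<le> Sx'$k$k" for k
    using assms by (auto simp: posdef_diag_def less_imp_le)
  then show ?thesis
    by (simp add: sum_Basis_prod_split sum_Basis_vec pair_sd_axis inner_axis_axis if_distrib[of "\<lambda>x. x * _"]
        cong: if_cong)
qed

lemma has_bochner_integral_q_post_quadratic:
  fixes A :: "real^'n^'n"
  assumes "posdef_diag Sx" "posdef_diag Sx'"
  shows "has_bochner_integral lborel
    (\<lambda>zz. q_post mx Sx mx' Sx' zz * ((fst zz - snd zz) \<bullet> (A *v (fst zz - snd zz))))
    (trace (A ** (Sx + Sx')) + (mx - mx') \<bullet> (A *v (mx - mx')))"
proof -
  interpret diag_normal "(mx, mx')" "pair_sd Sx Sx'" using diag_normal_pair_sd[OF assms] .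
  define w :: "'n \<Rightarrow> (real^'n) \<times> (real^'n)" where "w i = (axis i 1, - axis i 1)" for i
  have coord: "fst zz $ i - snd zz $ i = zz \<bullet> w i" for zz :: "(real^'n) \<times> (real^'n)" and i
    by (cases zz) (simp add: w_def inner_axis)
  have mean: "(mx, mx') \<bullet> w i = (mx - mx') $ i" for i
    by (simp add: w_def inner_axis)
  have "has_bochner_integral lborel
      (\<lambda>zz. \<Sum>i\<in>UNIV. \<Sum>j\<in>UNIV. A$i$j * (density zz * ((zz \<bullet> w i) * (zz \<bullet> w j))))
      (\<Sum>i\<in>UNIV. \<Sum>j\<in>UNIV. A$i$j * (((mx, mx') \<bullet> w i) * ((mx, mx') \<bullet> w j)
         + (\<Sum>b\<in>Basis. (w i \<bullet> b) * (w j \<bullet> b) * (pair_sd Sx Sx' b)^2)))"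
    by (intro has_bochner_integral_sum has_bochner_integral_mult_right
        has_bochner_integral_density_mult_inner)
  moreover have "(\<Sum>i\<in>UNIV. \<Sum>j\<in>UNIV. A$i$j * (density zz * ((zz \<bullet> w i) * (zz \<bullet> w j))))
      = density zz * ((fst zz - snd zz) \<bullet> (A *v (fst zz - snd zz)))" for zz
    by (simp add: coord inner_vec_def matrix_vector_mult_def sum_distrib_left mult_ac)
  moreover have "(\<Sum>i\<in>UNIV. \<Sum>j\<in>UNIV. A$i$j * (((mx, mx') \<bullet> w i) * ((mx, mx') \<bullet> w j)
         + (\<Sum>b\<in>Basis. (w i \<bullet> b) * (w j \<bullet> b) * (pair_sd Sx Sx' b)^2)))
      = trace (A ** (Sx + Sx')) + (mx - mx') \<bullet> (A *v (mx - mx'))"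
    unfolding mean unfolding w_def sum_Basis_pair_sd[OF assms] trace_add matrix_add_ldistrib
      trace_mult_posdef_diag[OF assms(1)] trace_mult_posdef_diag[OF assms(2)]
    by (simp add: inner_vec_def matrix_vector_mult_def distrib_left sum.distrib
        sum_distrib_left if_distrib[of "\<lambda>x. _ * x"] mult_ac cong: if_cong)
  ultimately show ?thesis by (simp add: q_post_eq_density[OF assms])
qed

lemma has_bochner_integral_q_post_ln_q_post:
  fixes Sx Sx' :: "real^'n^'n"
  assumes "posdef_diag Sx" "posdef_diag Sx'"
  shows "has_bochner_integral lborel
    (\<lambda>zz. q_post mx Sx mx' Sx' zz * ln (q_post mx Sx mx' Sx' zz))
    (- real CARD('n) * (ln (2 * pi) + 1) - (ln (det Sx) + ln (det Sx')) / 2)"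
proof -
  interpret diag_normal "(mx, mx')" "pair_sd Sx Sx'" using diag_normal_pair_sd[OF assms] .
  have pos: "0 < Sx$i$i" "0 < Sx'$i$i" for i
    using assms by (auto simp: posdef_diag_def)
  have "(\<Sum>b\<in>Basis. - (ln (2 * pi * (pair_sd Sx Sx' b)^2) + 1) / 2)
      = (\<Sum>i\<in>UNIV. - (ln (2 * pi * Sx$i$i) + 1) / 2) + (\<Sum>i\<in>UNIV. - (ln (2 * pi * Sx'$i$i) + 1) / 2)"
    unfolding sum_Basis_prod_split sum_Basis_vec pair_sd_axis using pos by (simp add: less_imp_le)
  also have "\<dots> = - real CARD('n) * (ln (2 * pi) + 1) - (ln (det Sx) + ln (det Sx')) / 2"
  proof -
    have "ln (2 * pi * Sx$i$i) = ln (2 * pi) + ln (Sx$i$i)" "ln (2 * pi * Sx'$i$i) = ln (2 * pi) + ln (Sx'$i$i)"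
      for i using pos[of i] by (simp_all add: ln_mult_pos)
    then show ?thesis
      by (simp add: ln_det_posdef_diag[OF assms(1)] ln_det_posdef_diag[OF assms(2)]
          sum_subtractf sum.distrib sum_divide_distrib[symmetric] algebra_simps) (simp add: field_simps)
  qed
  finally show ?thesis
    using has_bochner_integral_density_ln_density by (simp add: q_post_eq_density[OF assms])
qed

section \<open>The KL divergence to the prior\<close>

lemma ln_gauss_pdf_difference:
  fixes S :: "real^'n^'n"
  assumes "posdef S"
  shows "ln (gauss_pdf 0 (z - z') (2 *\<^sub>R S)) = - (1/4) * ((z - z') \<bullet> (matrix_inv S *v (z - z')))
    - (1/2) * (real CARD('n) * ln (4 * pi) + ln (det S))"
proof -
  have "ln (det (2 *\<^sub>R S)) = real CARD('n) * ln 2 + ln (det S)"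
    using posdef_det_pos[OF assms] by (simp add: det_scaleR ln_mult_pos ln_realpow)
  moreover have "ln (4 * pi) = ln (2 * pi) + ln 2"
    by (simp add: ln_mult_pos[symmetric])
  ultimately show ?thesis
    by (simp add: ln_gauss_pdf[OF posdef_scaleR[OF assms]] matrix_inv_scaleR[OF posdef_invertible[OF assms]]
        scaleR_matrix_vector_assoc[symmetric] algebra_simps)
qed

lemma sym_posdef_add_half_scaleR:
  assumes "sym_posdef Saug" "sym_posdef Sc"
  shows "posdef (Sc + (1/2) *\<^sub>R Saug)"
  using assms by (intro posdef_add_scaleR sym_posdef_imp_posdef) auto

lemma mix_term_pos:
  assumes "sym_posdef Saug" "\<And>c. c < C \<Longrightarrow> 0 \<le> pic c" "(\<Sum>c<C. pic c) = 1"
    and "\<And>c. c < C \<Longrightarrow> sym_posdef (Sc c)"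
  shows "0 < mix_term Saug C pic mu Sc zz"
  unfolding mix_term_def using assms sym_posdef_add_half_scaleR by (intro gauss_mixture_pos) auto

lemma ln_mix_term_bound:
  assumes "sym_posdef Saug" "\<And>c. c < C \<Longrightarrow> 0 \<le> pic c" "(\<Sum>c<C. pic c) = 1"
    and "\<And>c. c < C \<Longrightarrow> sym_posdef (Sc c)"
  obtains K B where "\<And>zz. \<bar>ln (mix_term Saug C pic mu Sc zz)\<bar> \<le> K + B * (norm zz)^2"
proof -
  obtain K B where "0 \<le> B" and bound:
      "\<And>v. \<bar>ln (\<Sum>c<C. pic c * gauss_pdf v (mu c) (Sc c + (1/2) *\<^sub>R Saug))\<bar> \<le> K + B * (norm v)^2"
    by (rule ln_gauss_mixture_bound[of C "\<lambda>c. Sc c + (1/2) *\<^sub>R Saug" pic mu])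
      (use assms in \<open>auto intro: sym_posdef_add_half_scaleR\<close>)
  have "norm ((1/2) *\<^sub>R (fst zz + snd zz)) \<le> norm zz" for zz :: "(real^'n) \<times> (real^'n)"
  proof -
    have "norm (fst zz) \<le> norm zz" "norm (snd zz) \<le> norm zz"
      by (cases zz; simp add: norm_fst_le norm_snd_le)+
    then show ?thesis using norm_triangle_ineq[of "fst zz" "snd zz"] by simp
  qed
  then have "(norm ((1/2) *\<^sub>R (fst zz + snd zz)))^2 \<le> (norm zz)^2" for zz :: "(real^'n) \<times> (real^'n)"
    by (simp add: power_mono)
  then have "\<bar>ln (mix_term Saug C pic mu Sc zz)\<bar> \<le> K + B * (norm zz)^2" for zz
    unfolding mix_term_def using bound[of "(1/2) *\<^sub>R (fst zz + snd zz)"] \<open>0 \<le> B\<close>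
    by (meson add_left_mono mult_left_mono order_trans)
  then show ?thesis by (rule that)
qed

lemma borel_measurable_ln_mix_term: "(\<lambda>zz. ln (mix_term Saug C pic mu Sc zz)) \<in> borel_measurable lborel"
proof -
  have "continuous_on UNIV (mix_term Saug C pic mu Sc)"
    unfolding mix_term_def by (intro continuous_intros)
  then have "mix_term Saug C pic mu Sc \<in> borel_measurable borel"
    by (rule borel_measurable_continuous_onI)
  then show ?thesis by simp
qed

lemma KL_div_q_post_prior_psi:
  fixes Saug :: "real^'n^'n"
  assumes "sym_posdef Saug" "\<And>c. c < C \<Longrightarrow> 0 \<le> pic c" "(\<Sum>c<C. pic c) = 1"
    and "\<And>c. c < C \<Longrightarrow> sym_posdef (Sc c)" "posdef_diag Sx" "posdef_diag Sx'"
  shows "KL_div (q_post mx Sx mx' Sx') (prior_psi Saug C pic mu Sc) =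
      - real CARD('n) * (ln (2 * pi) + 1) - (ln (det Sx) + ln (det Sx')) / 2
    + (1/4) * (trace (matrix_inv Saug ** (Sx + Sx')) + (mx - mx') \<bullet> (matrix_inv Saug *v (mx - mx')))
    + (1/2) * (real CARD('n) * ln (4 * pi) + ln (det Saug))
    - expect (q_post mx Sx mx' Sx') (\<lambda>zz. ln (mix_term Saug C pic mu Sc zz))"
proof -
  let ?q = "q_post mx Sx mx' Sx'" and ?mix = "mix_term Saug C pic mu Sc"
  let ?Q = "\<lambda>zz. (fst zz - snd zz) \<bullet> (matrix_inv Saug *v (fst zz - snd zz))"
  define c where "c = (1/2) * (real CARD('n) * ln (4 * pi) + ln (det Saug))"
  have pd: "posdef Saug" using assms(1) by (rule sym_posdef_imp_posdef)
  have ln_prior: "ln (prior_psi Saug C pic mu Sc zz) = - (1/4) * ?Q zz - c + ln (?mix zz)" for zz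
    using gauss_pdf_pos[OF posdef_scaleR[OF pd], of 2] mix_term_pos[OF assms(1-4)]
    by (simp add: prior_psi_def ln_mult_pos ln_gauss_pdf_difference[OF pd] c_def)
  \<comment> \<open>Stated for real atoms, so that simplification does not expand the quadratic form.\<close>
  have ring_identity: "q * (l - (- (1/4) * Q - c + m)) = q * l + (1/4) * (q * Q) + c * q - q * m"
    for q l Q m :: real
    by (simp add: algebra_simps)
  have integrand: "?q zz * (ln (?q zz) - ln (prior_psi Saug C pic mu Sc zz))
      = ?q zz * ln (?q zz) + (1/4) * (?q zz * ?Q zz) + c * ?q zz - ?q zz * ln (?mix zz)" for zz
    unfolding ln_prior by (rule ring_identity)
  obtain K B where "\<And>zz. \<bar>ln (?mix zz)\<bar> \<le> K + B * (norm zz)^2"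
    using ln_mix_term_bound[of Saug C pic Sc mu, OF assms(1-4)] by blast
  then have "integrable lborel (\<lambda>zz. ?q zz * ln (?mix zz))"
    unfolding q_post_eq_density[OF assms(5,6)]
    by (rule diag_normal.integrable_density_mult[OF diag_normal_pair_sd[OF assms(5,6)]
          borel_measurable_ln_mix_term])
  then have "has_bochner_integral lborel (\<lambda>zz. ?q zz * (ln (?q zz) - ln (prior_psi Saug C pic mu Sc zz)))
      ((- real CARD('n) * (ln (2 * pi) + 1) - (ln (det Sx) + ln (det Sx')) / 2)
       + (1/4) * (trace (matrix_inv Saug ** (Sx + Sx')) + (mx - mx') \<bullet> (matrix_inv Saug *v (mx - mx')))
       + c * 1 - expect ?q (\<lambda>zz. ln (?mix zz)))"
    unfolding integrand expect_def
    by (intro has_bochner_integral_diff has_bochner_integral_add has_bochner_integral_mult_right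
        has_bochner_integral_q_post_ln_q_post has_bochner_integral_q_post_quadratic
        has_bochner_integral_q_post assms(5,6) has_bochner_integral_integrable)
  then show ?thesis
    unfolding KL_div_def expect_def c_def by (simp add: has_bochner_integral_iff)
qed

theorem theorem2:
  fixes Saug :: "real^'n^'n"
    and C :: nat and pic :: "nat \<Rightarrow> real" and mu :: "nat \<Rightarrow> real^'n" and Sc :: "nat \<Rightarrow> real^'n^'n"
    and mx mx' :: "real^'n" and Sx Sx' :: "real^'n^'n"
    and ptheta :: "'x \<Rightarrow> ((real^'n) \<times> (real^'n)) \<Rightarrow> real" and xbar :: 'x
  assumes "sym_posdef Saug"
    and "C \<ge> 1"
    and "\<And>c. c < C \<Longrightarrow> 0 \<le> pic c \<and> pic c \<le> 1"
    and "(\<Sum>c<C. pic c) = 1"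
    and "\<And>c. c < C \<Longrightarrow> sym_posdef (Sc c)"
    and "posdef_diag Sx" and "posdef_diag Sx'"
  shows "elbo ptheta xbar (q_post mx Sx mx' Sx') (prior_psi Saug C pic mu Sc) =
      expect (q_post mx Sx mx' Sx') (\<lambda>zz. ln (ptheta xbar zz))
    + expect (q_post mx Sx mx' Sx') (\<lambda>zz. ln (mix_term Saug C pic mu Sc zz))
    - (1/4) * (trace (matrix_inv Saug ** (Sx + Sx'))
               + (mx - mx') \<bullet> (matrix_inv Saug *v (mx - mx')))
    + (1/2) * (ln (det Sx) + ln (det Sx'))
    + real CARD('n) + (real CARD('n) / 2) * ln pi
    - (1/2) * ln (det Saug)"
proof -
  have "\<And>c. c < C \<Longrightarrow> 0 \<le> pic c" using assms(3) by blast
  note KL = KL_div_q_post_prior_psi[of Saug C pic Sc Sx Sx' mx mx' mu, OF assms(1) this assms(4-7)]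
  have "ln (4 * pi) = 2 * ln 2 + ln pi" "ln (2 * pi) = ln 2 + ln pi"
    by (simp_all add: ln_mult_pos flip: ln_realpow[of 2 2, simplified])
  then show ?thesis by (simp add: elbo_def KL algebra_simps)
qed

end
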